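(* For every $(a,b)\in\mathbb{Z}^2$, $\mu_1E_{(a,b)}-E_{\psi(a,b)}\in q^{-\frac12}\mathcal{A}_+$, where $\psi(a,b)=(-a-[-b]_+,\,b)$.
   Context: Let $\mathcal{T}$ be the quantum torus over $\mathbb{Z}[q^{\pm\frac12}]$ generated by $X_1^{\pm1},X_2^{\pm1}$ with $X_1X_2=qX_2X_1$, with skew field of fractions $\mathcal{F}$. Define $X_k\in\mathcal{F}$ ($k\in\mathbb{Z}$) by $X_{k-1}X_{k+1}=q^{\frac12}X_k+1$ for $k$ odd and $X_{k-1}X_{k+1}=q^2X_k^4+1$ for $k$ even; $\mathcal{A}_q(1,4)$ is the $\mathbb{Z}[q^{\pm\frac12}]$-subalgebra of $\mathcal{F}$ generated by all $X_k$. For $x\in\mathbb{Z}$, $[x]_+=\max(x,0)$. Standard monomials: $E_{(a,b)}=q^{-\frac12ab}X_3^{[-a]_+}X_1^{[a]_+}X_2^{[b]_+}X_0^{[-b]_+}$; $\mathcal{A}_+=\bigoplus_{(a,b)\in\mathbb{Z}^2}\mathbb{Z}[q^{-\frac12}]E_{(a,b)}$. Also $\mu_1E_{(a,b)}=q^{-\frac12ab}X_4^{[-b]_+}X_2^{[b]_+}X_3^{[a]_+}X_1^{[-a]_+}$. *)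

theory Defs
  imports Main
begin

definition pp :: "int \<Rightarrow> int" where
  "pp x = max x 0"

text \<open>An embedding of the quantum torus T over Z[q^(+-1/2)] into a division ring:
  t is the image of q^(1/2) (central), x1, x2 the images of X_1, X_2, with
  X_1 X_2 = q X_2 X_1, and the images of the Z-basis q^(i/2) X_1^j X_2^k of T
  are Z-linearly independent (i.e. the induced ring map T -> D is injective).
  By the universal property of the Ore skew field of fractions F of T, the
  division subring generated by such an image is a copy of F.\<close>
definition qtorus_embedding :: "'a::division_ring \<Rightarrow> 'a \<Rightarrow> 'a \<Rightarrow> bool" where
  "qtorus_embedding t x1 x2 \<longleftrightarrow>
     t \<noteq> 0 \<and> x1 \<noteq> 0 \<and> x2 \<noteq> 0 \<and>
     (\<forall>y. t * y = y * t) \<and>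
     x1 * x2 = t ^ 2 * (x2 * x1) \<and>
     (\<forall>S c. finite (S :: (int \<times> int \<times> int) set) \<longrightarrow>
        (\<Sum>(i,j,k)\<in>S. of_int (c (i,j,k)) * (t powi i * x1 powi j * x2 powi k)) = 0 \<longrightarrow>
        (\<forall>s\<in>S. c s = (0::int)))"

text \<open>The exchange relations of A_q(1,4), with q^(1/2) = t (so q = t^2, q^2 = t^4).\<close>
definition cluster_seq :: "'a::division_ring \<Rightarrow> (int \<Rightarrow> 'a) \<Rightarrow> bool" where
  "cluster_seq t X \<longleftrightarrow>
     (\<forall>k. (odd k \<longrightarrow> X (k - 1) * X (k + 1) = t * X k + 1) \<and>
          (even k \<longrightarrow> X (k - 1) * X (k + 1) = t ^ 4 * X k ^ 4 + 1))"

definition stdE :: "'a::division_ring \<Rightarrow> (int \<Rightarrow> 'a) \<Rightarrow> int \<Rightarrow> int \<Rightarrow> 'a" where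
  "stdE t X a b = t powi (- (a * b)) * X 3 ^ nat (pp (- a)) * X 1 ^ nat (pp a)
                    * X 2 ^ nat (pp b) * X 0 ^ nat (pp (- b))"

definition mu1E :: "'a::division_ring \<Rightarrow> (int \<Rightarrow> 'a) \<Rightarrow> int \<Rightarrow> int \<Rightarrow> 'a" where
  "mu1E t X a b = t powi (- (a * b)) * X 4 ^ nat (pp (- b)) * X 2 ^ nat (pp b)
                    * X 3 ^ nat (pp a) * X 1 ^ nat (pp (- a))"

text \<open>Membership in q^(-1/2) A_+, i.e. in the span of the E_(a,b) with coefficients
  in q^(-1/2) Z[q^(-1/2)] (integer polynomials in q^(-1/2) without constant term).\<close>
definition in_qminus_Aplus :: "'a::division_ring \<Rightarrow> (int \<Rightarrow> 'a) \<Rightarrow> 'a \<Rightarrow> bool" where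
  "in_qminus_Aplus t X y \<longleftrightarrow>
     (\<exists>S c. finite (S :: (int \<times> int \<times> nat) set) \<and>
        y = (\<Sum>(a,b,n)\<in>S. of_int (c (a,b,n)) * inverse t ^ Suc n * stdE t X a b))"

definition psi :: "int \<times> int \<Rightarrow> int \<times> int" where
  "psi ab = (- fst ab - pp (- snd ab), snd ab)"

end

theory Submission
  imports Defs
begin

(* If b >= 0, mu_1 E_(a,b) is already the standard monomial E_(-a,b), by q-commutation.
   Let b = -c < 0. The exchange relation x3 x0 = q^(1/2) x4 + q^(-3/2) x2^3 shows that
   E_(-j,-j) = q^(-j^2/2) x3^j x0^j equals x4^j plus a combination of the cluster monomials
   x3^i x2^g, x3^i x4^g of lower degree; hence x3^a x4^c agrees with q^(ac/2) E_(-a-c,-c) modulo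
   q^(-1/2) A_+, which is the case a >= 0. For a = -u < 0 one expands x4^j x1^j symmetrically
   by x4 x1 = q^(1/2) x0 + q^(-3/2) x2^3; the products x4^g x1^u' with g < c produced by the mixed
   terms are controlled by strong induction on c. All degrees are measured by straightening
   words x3^i x1^s x2^j x0^n into standard monomials, which never produces a power of q^(1/2)
   above (i - s)(n - j). *)

(* Powers t powi k of t = q^(1/2) stay folded as T k. *)
declare power_int_numeral [simp del] power_int_1_right [simp del] power_int_of_nat [simp del]
  power_int_minus1_right [simp del]

lemma in_qminus_Aplus_zero: "in_qminus_Aplus t X 0"
  unfolding in_qminus_Aplus_def by (rule exI[of _ "{}"]) simp

lemma in_qminus_Aplus_add:
  assumes "in_qminus_Aplus t X x" and "in_qminus_Aplus t X y"
  shows "in_qminus_Aplus t X (x + y)"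
proof -
  define g where "g c = (\<lambda>(a, b, n). of_int (c (a, b, n)) * inverse t ^ Suc n * stdE t X a b)"
    for c :: "int \<times> int \<times> nat \<Rightarrow> int"
  obtain S1 c1 S2 c2 where fin: "finite S1" "finite S2"
    and x: "x = sum (g c1) S1" and y: "y = sum (g c2) S2"
    using assms unfolding in_qminus_Aplus_def g_def by blast
  define c1' where "c1' p = (if p \<in> S1 then c1 p else 0)" for p
  define c2' where "c2' p = (if p \<in> S2 then c2 p else 0)" for p
  have "x = sum (g c1') (S1 \<union> S2)"
    unfolding x by (rule sum.mono_neutral_cong_left) (auto simp: fin c1'_def g_def)
  moreover have "y = sum (g c2') (S1 \<union> S2)"
    unfolding y by (rule sum.mono_neutral_cong_left) (auto simp: fin c2'_def g_def)
  moreover have "g c1' p + g c2' p = g (\<lambda>p. c1' p + c2' p) p" for p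
    by (cases p) (simp add: g_def distrib_right)
  ultimately have "x + y = sum (g (\<lambda>p. c1' p + c2' p)) (S1 \<union> S2)"
    by (simp flip: sum.distrib)
  thus ?thesis
    unfolding in_qminus_Aplus_def g_def using fin
    by (intro exI[of _ "S1 \<union> S2"] exI[of _ "\<lambda>p. c1' p + c2' p"]) simp
qed

lemma in_qminus_Aplus_monomial:
  assumes "e \<le> -1"
  shows "in_qminus_Aplus t X (of_int n * t powi e * stdE t X a b)"
proof -
  have "nat (- e) = Suc (nat (- e - 1))"
    using assms by simp
  hence "t powi e = inverse t ^ Suc (nat (- e - 1))"
    using assms by (simp add: power_int_def del: power_Suc)
  hence "of_int n * t powi e * stdE t X a b
      = (\<Sum>(a', b', k)\<in>{(a, b, nat (- e - 1))}. of_int n * inverse t ^ Suc k * stdE t X a' b')"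
    by simp
  thus ?thesis
    unfolding in_qminus_Aplus_def
    by (intro exI[of _ "{(a, b, nat (- e - 1))}"] exI[of _ "\<lambda>_. n"]) simp
qed

locale cluster_1_4 =
  fixes t :: "'a::division_ring" and X :: "int \<Rightarrow> 'a"
  assumes t_nonzero: "t \<noteq> 0" and t_central: "\<And>y. t * y = y * t"
    and X1_nonzero: "X 1 \<noteq> 0" and X2_nonzero: "X 2 \<noteq> 0"
    and X1_X2_commute: "X 1 * X 2 = t^2 * (X 2 * X 1)"
    and cluster: "cluster_seq t X"
begin

abbreviation T :: "int \<Rightarrow> 'a" where "T e \<equiv> t powi e"

abbreviation "x0 \<equiv> X 0"
abbreviation "x1 \<equiv> X 1"
abbreviation "x2 \<equiv> X 2"
abbreviation "x3 \<equiv> X 3"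
abbreviation "x4 \<equiv> X 4"

lemma t_power_commute: "t ^ n * y = y * t ^ n"
  by (induction n) (simp_all add: mult.assoc t_central, metis mult.assoc t_central)

lemma inverse_t_commute: "inverse t * y = y * inverse t"
proof -
  have "inverse t * (t * y) * inverse t = inverse t * (y * t) * inverse t"
    by (simp add: t_central)
  also have "inverse t * (t * y) * inverse t = y * inverse t"
    using t_nonzero by (simp flip: mult.assoc)
  also have "inverse t * (y * t) * inverse t = inverse t * y"
    using t_nonzero by (simp add: mult.assoc)
  finally show ?thesis by simp
qed

lemma inverse_t_power_commute: "inverse t ^ n * y = y * inverse t ^ n"
  by (induction n) (simp_all add: mult.assoc inverse_t_commute, metis mult.assoc inverse_t_commute)

lemma T_commute: "T e * y = y * T e"
  by (simp add: power_int_def t_power_commute inverse_t_power_commute)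

lemma T_mult: "T a * T b = T (a + b)"
  using power_int_add[of t a b] t_nonzero by simp

lemma T_mult_left: "T a * (T b * y) = T (a + b) * y"
  by (simp add: T_mult flip: mult.assoc)

lemma T_pull_left: "y * (T e * z) = T e * (y * z)"
  by (metis T_commute mult.assoc)

lemma T_of_int_mult: "T k * (of_int n * T e * y) = of_int n * T (k + e) * y"
  by (metis T_commute T_mult_left mult.assoc)

lemma of_int_T_pull_left: "z * (of_int n * T e * y) = of_int n * T e * (z * y)"
  by (metis T_pull_left mult.assoc mult_of_int_commute)

lemma T_numeral: "T 1 = t" "t ^ 2 = T 2" "t ^ 4 = T 4"
  by (simp_all add: power_int_def power_int_1_right)

(* The general T_pull_left and T_commute loop as simp rules; these instances do not. *)

lemmas T_pull_X = T_pull_left[of "X k"] for k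
lemmas T_pull_X_power = T_pull_left[of "X k ^ n"] for k n

lemmas T_normalize = mult.assoc distrib_left distrib_right T_mult_left T_mult T_pull_X
    T_pull_X_power
  T_commute[of _ "X k", symmetric] T_commute[of _ "X k ^ n", symmetric] for k n

subsection \<open>Exchange and commutation relations\<close>

lemma power_Suc_plus1: "(a::'a)^n * a = a^(n+1)" "(a::'a) * a^n = a^(n+1)"
  by (simp_all only: Suc_eq_plus1[symmetric] power_Suc2[symmetric] power_Suc[symmetric])

lemma rewrite_assoc: "(a::'a) * b = c \<Longrightarrow> a * (b * y) = c * y"
  by (metis mult.assoc)

lemma exchange_02: "x0 * x2 = T 1 * x1 + 1"
  using cluster[unfolded cluster_seq_def, rule_format, of 1] by (simp add: T_numeral)

lemma exchange_13: "x1 * x3 = T 4 * x2^4 + 1"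
  using cluster[unfolded cluster_seq_def, rule_format, of 2] by (simp add: T_numeral)

lemma exchange_24: "x2 * x4 = T 1 * x3 + 1"
  using cluster[unfolded cluster_seq_def, rule_format, of 3] by (simp add: T_numeral)

lemma commute_12: "x1 * x2 = T 2 * (x2 * x1)"
  using X1_X2_commute by (simp add: T_numeral)

lemmas exchange_02_assoc = rewrite_assoc[OF exchange_02]
  and exchange_13_assoc = rewrite_assoc[OF exchange_13]
  and exchange_24_assoc = rewrite_assoc[OF exchange_24]
  and commute_12_assoc = rewrite_assoc[OF commute_12]

lemma commute_01: "x0 * x1 = T 2 * (x1 * x0)"
proof -
  have "(x0 * x1) * x2 = (T 2 * (x1 * x0)) * x2"
    by (simp add: commute_12_assoc commute_12 exchange_02_assoc exchange_02 T_normalize)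
  thus ?thesis using X2_nonzero by simp
qed

lemma commute_23: "x2 * x3 = T 2 * (x3 * x2)"
proof -
  have "x1 * (x2 * x3) = x1 * (T 2 * (x3 * x2))"
    by (simp add: commute_12_assoc commute_12 exchange_13_assoc exchange_13 T_normalize
        power_Suc_plus1)
  thus ?thesis using X1_nonzero by simp
qed

lemma commute_34: "x3 * x4 = T 2 * (x4 * x3)"
proof -
  have "x2 * (x3 * x4) = x2 * (T 2 * (x4 * x3))"
    by (simp add: rewrite_assoc[OF commute_23] exchange_24_assoc exchange_24 T_normalize)
  thus ?thesis using X2_nonzero by simp
qed

lemma qcommute_power_right:
  assumes "a * b = T k * (b * a)"
  shows "a * b^j = T (k * int j) * (b^j * a)"
proof (induction j)
  case 0 thus ?case by simp
next
  case (Suc j)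
  have "a * b^Suc j = T (k * int j) * (b^j * (a * b))"
    by (simp only: power_Suc2 mult.assoc[symmetric] Suc.IH)
  also have "\<dots> = T (k * int j + k) * (b^Suc j * a)"
    by (simp only: assms T_pull_left[of "b^j"] T_mult_left power_Suc2 mult.assoc)
  finally show ?case by (simp add: algebra_simps)
qed

lemma qcommute_powers:
  assumes "a * b = T k * (b * a)"
  shows "a^i * b^j = T (k * int i * int j) * (b^j * a^i)"
proof (induction i)
  case 0 thus ?case by simp
next
  case (Suc i)
  have "a^Suc i * b^j = T (k * int i * int j) * ((a * b^j) * a^i)"
    by (simp only: power_Suc mult.assoc Suc.IH T_pull_left[of a])
  also have "\<dots> = T (k * int i * int j + k * int j) * (b^j * a^Suc i)"
    by (simp only: qcommute_power_right[OF assms] mult.assoc T_mult_left power_Suc)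
  finally show ?case by (simp add: algebra_simps)
qed

lemma commute_reverse: "a * b = T k * (b * a) \<Longrightarrow> b * a = T (- k) * (a * b)"
  by (simp add: T_mult_left)

lemmas commute_21 = commute_reverse[OF commute_12]
  and commute_10 = commute_reverse[OF commute_01]
  and commute_32 = commute_reverse[OF commute_23]
  and commute_43 = commute_reverse[OF commute_34]

lemmas x0_power_x1_power = qcommute_powers[OF commute_01]
  and x2_power_x1_power = qcommute_powers[OF commute_21]

lemma exchange_20: "x2 * x0 = T (-1) * x1 + 1"
proof -
  have "(x2 * x0) * x2 = (T (-1) * x1 + 1) * x2"
    by (simp add: commute_12_assoc commute_12 exchange_02_assoc exchange_02 T_normalize)
  thus ?thesis using X2_nonzero by simp
qed

lemma exchange_31: "x3 * x1 = T (-4) * x2^4 + 1"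
proof -
  have "x1 * (x3 * x1) = x1 * (T (-4) * x2^4 + 1)"
    using qcommute_power_right[OF commute_12, of 4]
    by (simp add: exchange_13_assoc exchange_13 T_normalize)
  thus ?thesis using X1_nonzero by simp
qed

lemma exchange_42: "x4 * x2 = T (-1) * x3 + 1"
proof -
  have "x2 * (x4 * x2) = x2 * (T (-1) * x3 + 1)"
    by (simp add: exchange_24_assoc exchange_24 T_normalize commute_23)
  thus ?thesis using X2_nonzero by simp
qed

lemma exchange_30: "x3 * x0 = T 1 * x4 + T (-3) * x2^3"
proof -
  have "(x3 * x0) * x2 = (T 1 * x4 + T (-3) * x2^3) * x2"
    by (simp add: exchange_02_assoc exchange_02 T_normalize exchange_31 exchange_42 add_ac
        power_Suc_plus1)
  thus ?thesis using X2_nonzero by simp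
qed

lemma exchange_41: "x4 * x1 = T 1 * x0 + T (-3) * x2^3"
proof -
  have "x2 * (x4 * x1) = x2 * (T 1 * x0 + T (-3) * x2^3)"
    by (simp add: exchange_24_assoc exchange_24 T_normalize rewrite_assoc[OF exchange_31]
        exchange_31 exchange_20 add_ac power_Suc_plus1)
  thus ?thesis using X2_nonzero by simp
qed

subsection \<open>Spans of standard monomials with bounded powers of t\<close>

abbreviation E :: "int \<Rightarrow> int \<Rightarrow> 'a" where "E a b \<equiv> stdE t X a b"

(* The lower bounds a0, b0 matter because multiplying by x3^p or by x0^q x1^p raises the degree
   by an amount that depends on them (Espan_x3_power_mult, Espan_mult_x0_x1_power). *)
inductive Espan :: "int \<Rightarrow> int \<Rightarrow> int \<Rightarrow> 'a \<Rightarrow> bool" where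
  Espan_zero: "Espan d a0 b0 0"
| Espan_monomial: "e \<le> d \<Longrightarrow> a0 \<le> a \<Longrightarrow> b0 \<le> b \<Longrightarrow> Espan d a0 b0 (of_int n * T e * E a b)"
| Espan_add: "Espan d a0 b0 x \<Longrightarrow> Espan d a0 b0 y \<Longrightarrow> Espan d a0 b0 (x + y)"

lemma Espan_mono:
  "Espan d a0 b0 x \<Longrightarrow> d \<le> d' \<Longrightarrow> a0' \<le> a0 \<Longrightarrow> b0' \<le> b0 \<Longrightarrow> Espan d' a0' b0' x"
  by (induction rule: Espan.induct) (auto intro: Espan.intros)

lemma Espan_T_mult: "Espan d a0 b0 x \<Longrightarrow> Espan (d + k) a0 b0 (T k * x)"
  by (induction rule: Espan.induct)
    (auto simp: T_of_int_mult distrib_left intro: Espan.intros)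

lemma Espan_T_mult_mono: "Espan d a0 b0 x \<Longrightarrow> d + k \<le> d' \<Longrightarrow> Espan d' a0 b0 (T k * x)"
  using Espan_T_mult Espan_mono by blast

lemma Espan_of_int_mult: "Espan d a0 b0 x \<Longrightarrow> Espan d a0 b0 (of_int m * x)"
proof (induction rule: Espan.induct)
  case (Espan_monomial e d a0 a b0 b n)
  thus ?case using Espan.Espan_monomial[of e d a0 a b0 b "m * n"] by (simp add: mult.assoc)
qed (auto simp: distrib_left intro: Espan.intros)

lemma Espan_uminus: "Espan d a0 b0 x \<Longrightarrow> Espan d a0 b0 (- x)"
  using Espan_of_int_mult[of d a0 b0 x "-1"] by simp

lemma Espan_diff: "Espan d a0 b0 x \<Longrightarrow> Espan d a0 b0 y \<Longrightarrow> Espan d a0 b0 (x - y)"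
  using Espan_add[OF _ Espan_uminus, of d a0 b0 x y] by simp

lemma Espan_of_int_T_mult:
  "Espan d a0 b0 x \<Longrightarrow> d + e \<le> d' \<Longrightarrow> a0' \<le> a0 \<Longrightarrow> b0' \<le> b0
    \<Longrightarrow> Espan d' a0' b0' (of_int n * T e * x)"
  by (metis Espan_T_mult_mono Espan_mono Espan_of_int_mult mult.assoc order_refl)

lemma Espan_T_monomial: "e \<le> d \<Longrightarrow> a0 \<le> a \<Longrightarrow> b0 \<le> b \<Longrightarrow> Espan d a0 b0 (T e * E a b)"
  using Espan_monomial[of e d a0 a b0 b 1] by simp

lemma Espan_in_qminus_Aplus: "Espan (-1) a0 b0 x \<Longrightarrow> in_qminus_Aplus t X x"
proof (induction "-1::int" a0 b0 x rule: Espan.induct)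
  case (Espan_monomial e a0 a b0 b n)
  thus ?case by (simp add: in_qminus_Aplus_monomial)
qed (simp_all add: in_qminus_Aplus_zero in_qminus_Aplus_add)

lemma Espan_T_mult_add:
  "Espan d1 a0 b0 x \<Longrightarrow> Espan d2 a0 b0 y \<Longrightarrow> d1 + k \<le> d \<Longrightarrow> d2 \<le> d
    \<Longrightarrow> Espan d a0 b0 (T k * x + y)"
  by (meson Espan_T_mult_mono Espan_add Espan_mono order_refl)

subsection \<open>Straightening the words x3^i x1^s x2^j x0^n\<close>

definition word3120 :: "nat \<Rightarrow> nat \<Rightarrow> nat \<Rightarrow> nat \<Rightarrow> 'a" where
  "word3120 i s j n = x3^i * x1^s * x2^j * x0^n"

lemma word3120_standard:
  "i = 0 \<or> s = 0 \<Longrightarrow> j = 0 \<or> n = 0 \<Longrightarrow>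
    word3120 i s j n = T ((int i - int s) * (int n - int j)) * E (int s - int i) (int j - int n)"
  unfolding word3120_def stdE_def pp_def
  by (auto simp: mult.assoc T_mult_left algebra_simps)

lemma word3120_exchange_31:
  "word3120 (Suc i) (Suc s) j n = T (-4 - 8 * int s) * word3120 i s (4 + j) n + word3120 i s j n"
proof -
  have commute: "x2^4 * x1^s = T (-8 * int s) * (x1^s * x2^4)"
    using qcommute_powers[OF commute_21, of 4 s] by simp
  have "word3120 (Suc i) (Suc s) j n = x3^i * (x3 * x1) * x1^s * x2^j * x0^n"
    unfolding word3120_def by (simp only: power_Suc2[of x3 i] power_Suc[of x1 s] mult.assoc)
  also have "\<dots> = T (-4) * (x3^i * (x2^4 * x1^s) * x2^j * x0^n) + x3^i * x1^s * x2^j * x0^n"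
    by (simp add: exchange_31 T_normalize)
  also have "\<dots> = T (-4) * (T (-8 * int s) * (x3^i * x1^s * (x2^4 * x2^j) * x0^n))
      + x3^i * x1^s * x2^j * x0^n"
    by (simp add: commute T_normalize)
  also have "\<dots> = T (-4 - 8 * int s) * word3120 i s (4 + j) n + word3120 i s j n"
    unfolding word3120_def by (simp add: T_mult_left power_add mult.assoc)
  finally show ?thesis .
qed

lemma word3120_exchange_20:
  "word3120 i s (Suc j) (Suc n) = T (-1 - 2 * int j) * word3120 i (Suc s) j n + word3120 i s j n"
proof -
  have commute: "x2^j * x1 = T (-2 * int j) * (x1 * x2^j)"
    using qcommute_powers[OF commute_21, of j 1] by simp
  have "word3120 i s (Suc j) (Suc n) = x3^i * x1^s * (x2^j * (x2 * x0)) * x0^n"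
    unfolding word3120_def by (simp only: power_Suc2[of x2 j] power_Suc[of x0 n] mult.assoc)
  also have "\<dots> = T (-1) * (x3^i * x1^s * (x2^j * x1) * x0^n) + x3^i * x1^s * x2^j * x0^n"
    by (simp add: exchange_20 T_normalize)
  also have "\<dots> = T (-1) * (T (-2 * int j) * (x3^i * (x1^s * x1) * x2^j * x0^n))
      + x3^i * x1^s * x2^j * x0^n"
    by (simp add: commute T_normalize)
  also have "\<dots> = T (-1 - 2 * int j) * word3120 i (Suc s) j n + word3120 i s j n"
    unfolding word3120_def by (simp add: T_mult_left mult.assoc power_Suc_plus1(1))
  finally show ?thesis .
qed

(* Both exchanges lower i + n, and the degrees of the two new terms stay below the bound. *)
lemma word3120_Espan:
  "Espan ((int i - int s) * (int n - int j)) (- int i) (- int n) (word3120 i s j n)"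
proof (induction "i + n" arbitrary: i s j n rule: less_induct)
  case less
  consider i' s' where "i = Suc i'" "s = Suc s'" | j' n' where "j = Suc j'" "n = Suc n'"
    | "i = 0 \<or> s = 0" "j = 0 \<or> n = 0"
    by (meson not0_implies_Suc)
  thus ?case
  proof cases
    case (1 i' s')
    have "Espan ((int i' - int s') * (int n - int (4 + j))) (- int i) (- int n)
        (word3120 i' s' (4 + j) n)"
      using less(1)[of i' n s' "4 + j"] 1 by (auto elim: Espan_mono)
    moreover have "Espan ((int i' - int s') * (int n - int j)) (- int i) (- int n)
        (word3120 i' s' j n)"
      using less(1)[of i' n s' j] 1 by (auto elim: Espan_mono)
    ultimately show ?thesis
      unfolding 1 word3120_exchange_31 by (rule Espan_T_mult_add) (auto simp: algebra_simps)
  next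
    case (2 j' n')
    have "Espan ((int i - int (Suc s)) * (int n' - int j')) (- int i) (- int n)
        (word3120 i (Suc s) j' n')"
      using less(1)[of i n' "Suc s" j'] 2 by (auto elim: Espan_mono)
    moreover have "Espan ((int i - int s) * (int n' - int j')) (- int i) (- int n)
        (word3120 i s j' n')"
      using less(1)[of i n' s j'] 2 by (auto elim: Espan_mono)
    ultimately show ?thesis
      unfolding 2 word3120_exchange_20 by (rule Espan_T_mult_add) (auto simp: algebra_simps)
  next
    case 3
    thus ?thesis by (simp add: word3120_standard Espan_T_monomial)
  qed
qed

lemma E_word3120:
  "E a b = T (- (a * b)) * word3120 (nat (pp (- a))) (nat (pp a)) (nat (pp b)) (nat (pp (- b)))"
  by (simp add: stdE_def word3120_def mult.assoc)

lemma pp_diff: "int (nat (pp a)) - int (nat (pp (- a))) = a" "int (nat (pp (- a))) = - min a 0"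
  by (auto simp: pp_def)

lemma x3_power_word3120: "x3^p * word3120 i s j n = word3120 (p + i) s j n"
  by (simp add: word3120_def power_add mult.assoc)

lemma word3120_mult_x0_x1:
  "word3120 i s j n * x0^q * x1^p
      = T (2 * int p * (int (n + q) - int j)) * word3120 i (s + p) j (n + q)"
proof -
  have "word3120 i s j n * x0^q * x1^p = x3^i * x1^s * (x2^j * (x0^(n + q) * x1^p))"
    unfolding word3120_def by (simp add: power_add mult.assoc)
  also have "\<dots> = T (2 * int (n + q) * int p) * (x3^i * x1^s * ((x2^j * x1^p) * x0^(n + q)))"
    by (simp only: x0_power_x1_power T_normalize)
  also have "\<dots> = T (2 * int (n + q) * int p + -2 * int j * int p)
      * (x3^i * (x1^s * x1^p) * x2^j * x0^(n + q))"
    by (simp only: x2_power_x1_power T_normalize)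
  also have "2 * int (n + q) * int p + -2 * int j * int p = 2 * int p * (int (n + q) - int j)"
    by (simp add: algebra_simps)
  also have "x3^i * (x1^s * x1^p) * x2^j * x0^(n + q) = word3120 i (s + p) j (n + q)"
    unfolding word3120_def by (simp only: power_add)
  finally show ?thesis .
qed

lemma Espan_x3_power_mult:
  "Espan d a0 b0 x \<Longrightarrow> a0 \<le> 0 \<Longrightarrow> b0 \<le> 0
    \<Longrightarrow> Espan (d - int p * b0) (a0 - int p) b0 (x3^p * x)"
proof (induction rule: Espan.induct)
  case (Espan_monomial e d a0 a b0 b n)
  let ?i = "nat (pp (- a))" and ?s = "nat (pp a)" and ?j = "nat (pp b)" and ?n = "nat (pp (- b))"
  have diff: "int (p + ?i) - int ?s = int p - a" "int ?n - int ?j = - b"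
    using pp_diff[of a] pp_diff[of b] by auto
  have "x3^p * (of_int n * T e * E a b)
      = of_int n * (T (e + - (a * b)) * word3120 (p + ?i) ?s ?j ?n)"
    unfolding of_int_T_pull_left E_word3120
    by (simp only: T_pull_left[of "x3^p"] x3_power_word3120 mult.assoc T_mult_left)
  moreover have "Espan ((int p - a) * (- b)) (- int (p + ?i)) (- int ?n)
      (word3120 (p + ?i) ?s ?j ?n)"
    using word3120_Espan[of "p + ?i" ?s ?n ?j] by (simp only: diff)
  hence "Espan ((int p - a) * (- b)) (a0 - int p) b0 (word3120 (p + ?i) ?s ?j ?n)"
    by (rule Espan_mono) (use Espan_monomial in \<open>auto simp: pp_def\<close>)
  moreover have "(int p - a) * (- b) + (e + - (a * b)) \<le> d - int p * b0"
    using Espan_monomial mult_left_mono[of b0 b "int p"] by (simp add: algebra_simps)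
  ultimately show ?case by (metis Espan_T_mult_mono Espan_of_int_mult)
qed (auto simp: distrib_left intro: Espan.intros)

lemma Espan_mult_x0_x1_power:
  "Espan d a0 b0 x \<Longrightarrow> a0 \<le> 0 \<Longrightarrow> b0 \<le> 0
    \<Longrightarrow> Espan (d + int p * int q - int p * b0 - a0 * int q) a0 (b0 - int q) (x * x0^q * x1^p)"
proof (induction rule: Espan.induct)
  case (Espan_monomial e d a0 a b0 b n)
  let ?i = "nat (pp (- a))" and ?s = "nat (pp a)" and ?j = "nat (pp b)" and ?n = "nat (pp (- b))"
  have diff: "int ?i - int (?s + p) = - a - int p" "int (?n + q) - int ?j = int q - b"
    using pp_diff[of a] pp_diff[of b] by auto
  have "(of_int n * T e * E a b) * x0^q * x1^p
      = of_int n * (T (e + (- (a * b) + 2 * int p * (int q - b))) * word3120 ?i (?s + p) ?j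
          (?n + q))"
    unfolding E_word3120
    by (simp only: mult.assoc word3120_mult_x0_x1[unfolded mult.assoc] T_mult_left diff add.assoc)
  moreover have "Espan ((- a - int p) * (int q - b)) (- int ?i) (- int (?n + q))
      (word3120 ?i (?s + p) ?j (?n + q))"
    using word3120_Espan[of ?i "?s + p" "?n + q" ?j] by (simp only: diff)
  hence "Espan ((- a - int p) * (int q - b)) a0 (b0 - int q) (word3120 ?i (?s + p) ?j (?n + q))"
    by (rule Espan_mono) (use Espan_monomial in \<open>auto simp: pp_def\<close>)
  moreover have "(- a - int p) * (int q - b) + (e + (- (a * b) + 2 * int p * (int q - b)))
      \<le> d + int p * int q - int p * b0 - a0 * int q"
    using Espan_monomial mult_left_mono[of b0 b "int p"] mult_right_mono[of a0 a "int q"]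
    by (simp add: algebra_simps)
  ultimately show ?case by (metis Espan_T_mult_mono Espan_of_int_mult)
qed (auto simp: distrib_right intro: Espan.intros)

subsection \<open>Spans of cluster monomials\<close>

lemma x4_x3_power: "x4 * x3^i = T (-2 * int i) * (x3^i * x4)"
  using qcommute_powers[OF commute_43, of 1 i] by simp
lemma x2_x3_power: "x2 * x3^i = T (2 * int i) * (x3^i * x2)"
  using qcommute_powers[OF commute_23, of 1 i] by simp

lemma x4_x3_power_x2_power: "x4 * (x3^i * x2^(Suc g))
    = T (-2 * int i - 1) * (x3^(Suc i) * x2^g) + T (-2 * int i) * (x3^i * x2^g)"
proof -
  have "x4 * (x3^i * x2^(Suc g)) = T (-2 * int i) * (x3^i * ((x4 * x2) * x2^g))"
    by (simp only: mult.assoc[symmetric] x4_x3_power power_Suc; simp only: mult.assoc)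
  also have "\<dots> = T (-2 * int i) * (T (-1) * (x3^i * x3 * x2^g) + x3^i * x2^g)"
    by (simp only: exchange_42 distrib_left distrib_right T_pull_X_power mult_1_left mult_1_right
        mult.assoc)
  also have "\<dots> = T (-2 * int i - 1) * (x3^(Suc i) * x2^g) + T (-2 * int i) * (x3^i * x2^g)"
    by (simp only: distrib_left T_mult_left power_Suc2 mult.assoc diff_conv_add_uminus)
  finally show ?thesis .
qed

lemma x4_x3_power_x2_0: "x4 * (x3^i * x2^0) = T (-2 * int i) * (x3^i * x4^1)"
  by (simp add: x4_x3_power)

lemma x4_x3_power_x4_power: "x4 * (x3^i * x4^g) = T (-2 * int i) * (x3^i * x4^(Suc g))"
  by (simp only: mult.assoc[symmetric] x4_x3_power power_Suc; simp only: mult.assoc)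

lemma x2_x3_power_x2_power: "x2 * (x3^i * x2^g) = T (2 * int i) * (x3^i * x2^(Suc g))"
  by (simp only: mult.assoc[symmetric] x2_x3_power power_Suc; simp only: mult.assoc)

lemma x2_x3_power_x4_power: "x2 * (x3^i * x4^(Suc g))
    = T (2 * int i + 1) * (x3^(Suc i) * x4^g) + T (2 * int i) * (x3^i * x4^g)"
proof -
  have "x2 * (x3^i * x4^(Suc g)) = T (2 * int i) * (x3^i * ((x2 * x4) * x4^g))"
    by (simp only: mult.assoc[symmetric] x2_x3_power power_Suc; simp only: mult.assoc)
  also have "\<dots> = T (2 * int i) * (T 1 * (x3^i * x3 * x4^g) + x3^i * x4^g)"
    by (simp only: exchange_24 distrib_left distrib_right T_pull_X_power mult_1_left mult_1_right
        mult.assoc)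
  also have "\<dots> = T (2 * int i + 1) * (x3^(Suc i) * x4^g) + T (2 * int i) * (x3^i * x4^g)"
    by (simp only: distrib_left T_mult_left power_Suc2 mult.assoc)
  finally show ?thesis .
qed

lemma x2_x3_power_x4_0: "x2 * (x3^i * x4^0) = T (2 * int i) * (x3^i * x2^1)"
  by (simp add: x2_x3_power)

(* Combinations of x3^(a+s) x2^g and x3^(a+s) x4^g, closed under left multiplication by x2 and x4.
   B bounds the degree they have as combinations of standard monomials (x3^i x2^g is
   q^(-ig/2) E_(-i,g), and x3^i x4^g has degree ig). *)
inductive span324 :: "nat \<Rightarrow> nat \<Rightarrow> int \<Rightarrow> int \<Rightarrow> 'a \<Rightarrow> bool" for a where
  span324_zero: "span324 a m h B 0"
| span324_x2: "s \<le> m \<Longrightarrow> h \<le> int g + int m \<Longrightarrow> e - int (a+s) * int g \<le> B \<Longrightarrow>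
       span324 a m h B (of_int n * T e * (x3^(a+s) * x2^g))"
| span324_x4: "s + g \<le> m \<Longrightarrow> h \<le> int m - int g \<Longrightarrow> e + int (a+s) * int g \<le> B \<Longrightarrow>
       span324 a m h B (of_int n * T e * (x3^(a+s) * x4^g))"
| span324_add: "span324 a m h B x \<Longrightarrow> span324 a m h B y \<Longrightarrow> span324 a m h B (x + y)"

lemma span324_mono: "span324 a m h B Z \<Longrightarrow> m \<le> m' \<Longrightarrow> h' \<le> h \<Longrightarrow> B \<le> B' \<Longrightarrow> span324 a m' h' B' Z"
  by (induction rule: span324.induct) (auto intro: span324.intros)

lemma T_mult_of_int_pull: "T k * (x * (of_int n * T e * Y)) = of_int n * T (k + e) * (x * Y)"
  by (simp only: of_int_T_pull_left[of x] T_of_int_mult)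

lemma of_int_T_distrib: "of_int n * T e * (T k1 * Y1 + T k2 * Y2)
    = of_int n * T (e + k1) * Y1 + of_int n * T (e + k2) * Y2"
  by (simp only: distrib_left mult.assoc T_mult_left)

lemma span324_T_mult: "span324 a m h B Z \<Longrightarrow> span324 a m h (B + k) (T k * Z)"
  by (induction rule: span324.induct) (auto simp: T_of_int_mult distrib_left intro: span324.intros)

lemma span324_x2I: "s \<le> m \<Longrightarrow> h \<le> int g + int m \<Longrightarrow> e - int (a+s) * int g \<le> B \<Longrightarrow>
       Z = of_int n * T e * (x3^(a+s) * x2^g) \<Longrightarrow> span324 a m h B Z"
  using span324_x2 by simp
lemma span324_x4I: "s + g \<le> m \<Longrightarrow> h \<le> int m - int g \<Longrightarrow> e + int (a+s) * int g \<le> B \<Longrightarrow>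
       Z = of_int n * T e * (x3^(a+s) * x4^g) \<Longrightarrow> span324 a m h B Z"
  using span324_x4 by simp

lemma span324_x4_mult: "span324 a m h B Z
    \<Longrightarrow> span324 a (Suc m) h (B + int a) (T (2 * int a) * (x4 * Z))"
proof (induction rule: span324.induct)
  case (span324_zero m h B) thus ?case by (simp add: span324.span324_zero)
next
  case (span324_x2 s m h g e B n)
  show ?case
  proof (cases g)
    case 0
    have "T (2 * int a) * (x4 * (of_int n * T e * (x3^(a+s) * x2^g)))
        = of_int n * T (2 * int a + e + -2 * int (a+s)) * (x3^(a+s) * x4^1)"
      unfolding T_mult_of_int_pull 0 x4_x3_power_x2_0 by (simp only: mult.assoc T_mult_left)
    thus ?thesis using span324_x2 0
      by (intro span324_x4I[where s=s and g=1]) (auto simp: algebra_simps)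
  next
    case (Suc g')
    have "T (2 * int a) * (x4 * (of_int n * T e * (x3^(a+s) * x2^g))) =
      of_int n * T (2 * int a + e + (-2 * int (a+s) - 1)) * (x3^(a + Suc s) * x2^g')
          + of_int n * T (2 * int a + e + -2 * int (a+s)) * (x3^(a+s) * x2^g')"
      unfolding T_mult_of_int_pull Suc x4_x3_power_x2_power of_int_T_distrib by simp
    moreover have "span324 a (Suc m) h (B + int a)
        (of_int n * T (2 * int a + e + (-2 * int (a+s) - 1)) * (x3^(a + Suc s) * x2^g'))"
      using span324_x2 Suc
      by (intro span324_x2I[where s="Suc s" and g=g']) (auto simp: algebra_simps)
    moreover have "span324 a (Suc m) h (B + int a)
        (of_int n * T (2 * int a + e + -2 * int (a+s)) * (x3^(a+s) * x2^g'))"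
      using span324_x2 Suc by (intro span324_x2I[where s=s and g=g']) (auto simp: algebra_simps)
    ultimately show ?thesis by (simp add: span324.span324_add)
  qed
next
  case (span324_x4 s g m h e B n)
  have "T (2 * int a) * (x4 * (of_int n * T e * (x3^(a+s) * x4^g)))
      = of_int n * T (2 * int a + e + -2 * int (a+s)) * (x3^(a+s) * x4^(Suc g))"
    unfolding T_mult_of_int_pull x4_x3_power_x4_power by (simp only: mult.assoc T_mult_left)
  thus ?case using span324_x4
    by (intro span324_x4I[where s=s and g="Suc g"]) (auto simp: algebra_simps)
next
  case (span324_add m h B x y) thus ?case by (simp add: distrib_left span324.span324_add)
qed

lemma span324_x2_mult: "span324 a m h B Z
    \<Longrightarrow> span324 a m (h + 1) (B - int a + int m) (T (-2 * int a) * (x2 * Z))"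
proof (induction rule: span324.induct)
  case (span324_zero m h B) thus ?case by (simp add: span324.span324_zero)
next
  case (span324_x2 s m h g e B n)
  have "T (-2 * int a) * (x2 * (of_int n * T e * (x3^(a+s) * x2^g)))
      = of_int n * T (-2 * int a + e + 2 * int (a+s)) * (x3^(a+s) * x2^(Suc g))"
    unfolding T_mult_of_int_pull x2_x3_power_x2_power by (simp only: mult.assoc T_mult_left)
  thus ?case using span324_x2
    by (intro span324_x2I[where s=s and g="Suc g"]) (auto simp: algebra_simps)
next
  case (span324_x4 s g m h e B n)
  show ?case
  proof (cases g)
    case 0
    have "T (-2 * int a) * (x2 * (of_int n * T e * (x3^(a+s) * x4^g)))
        = of_int n * T (-2 * int a + e + 2 * int (a+s)) * (x3^(a+s) * x2^1)"
      unfolding T_mult_of_int_pull 0 x2_x3_power_x4_0 by (simp only: mult.assoc T_mult_left)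
    thus ?thesis using span324_x4 0
      by (intro span324_x2I[where s=s and g=1]) (auto simp: algebra_simps)
  next
    case (Suc g')
    have "T (-2 * int a) * (x2 * (of_int n * T e * (x3^(a+s) * x4^g))) =
      of_int n * T (-2 * int a + e + (2 * int (a+s) + 1)) * (x3^(a + Suc s) * x4^g')
          + of_int n * T (-2 * int a + e + 2 * int (a+s)) * (x3^(a+s) * x4^g')"
      unfolding T_mult_of_int_pull Suc x2_x3_power_x4_power of_int_T_distrib by simp
    moreover have "span324 a m (h + 1) (B - int a + int m)
        (of_int n * T (-2 * int a + e + (2 * int (a+s) + 1)) * (x3^(a + Suc s) * x4^g'))"
      using span324_x4 Suc
      by (intro span324_x4I[where s="Suc s" and g=g']) (auto simp: algebra_simps)
    moreover have "span324 a m (h + 1) (B - int a + int m)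
        (of_int n * T (-2 * int a + e + 2 * int (a+s)) * (x3^(a+s) * x4^g'))"
      using span324_x4 Suc by (intro span324_x4I[where s=s and g=g']) (auto simp: algebra_simps)
    ultimately show ?thesis by (simp add: span324.span324_add)
  qed
next
  case (span324_add m h B x y) thus ?case by (simp add: distrib_left span324.span324_add)
qed

lemma x3_power_x4: "x3^i * x4 = T (2 * int i) * (x4 * x3^i)"
  using qcommute_powers[OF commute_34, of i 1] by simp
lemma x3_power_x2_cube: "x3^i * x2^3 = T (-6 * int i) * (x2^3 * x3^i)"
  using qcommute_powers[OF commute_32, of i 3] by simp

lemma x3_power_x4_mult: "x3^a * (x4 * Z) = T (2 * int a) * (x4 * (x3^a * Z))"
  by (simp only: mult.assoc[symmetric] x3_power_x4; simp only: mult.assoc)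
lemma x3_power_x2_cube_mult: "x3^a * (x2^3 * Z) = T (-6 * int a) * (x2^3 * (x3^a * Z))"
  by (simp only: mult.assoc[symmetric] x3_power_x2_cube; simp only: mult.assoc)

(* diag30 j = E_(-j,-j), and diag30 (j + 1) = (x4 + q^(-4j-2) x2^3) diag30 j; defect30 j collects
   everything but the leading term x4^j. *)
definition diag30 :: "nat \<Rightarrow> 'a" where "diag30 j = T (- (int j * int j)) * (x3^j * x0^j)"

lemma diag30_0: "diag30 0 = 1" by (simp add: diag30_def)

lemma diag30_Suc: "diag30 (Suc j) = (x4 + T (-8 * int j - 4) * x2^3) * diag30 j"
proof -
  have "diag30 (Suc j) = T (- ((int j + 1) * (int j + 1))) * (x3^j * (x3 * x0) * x0^j)"
    unfolding diag30_def
    by (simp only: power_Suc2[of x3 j] power_Suc[of x0 j] of_nat_Suc add.commute[of 1] mult.assoc)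
  also have "\<dots>
      = T (- (int j * int j)) * (x4 * (x3^j * x0^j))
      + T (- (int j * int j) + (-8 * int j - 4)) * (x2^3 * (x3^j * x0^j))"
    by (simp only: exchange_30 distrib_left distrib_right mult.assoc T_pull_X_power T_pull_X
        x3_power_x4_mult x3_power_x2_cube_mult T_mult_left)
      (rule arg_cong2[where f="(+)"]; rule arg_cong[where f="\<lambda>e. T e * _"]; simp add: algebra_simps)
  also have "\<dots> = (x4 + T (-8 * int j - 4) * x2^3) * diag30 j"
    unfolding diag30_def
    by (simp only: distrib_right mult.assoc T_pull_X T_pull_X_power T_mult_left add.commute[of
        "- (int j * int j)"])
  finally show ?thesis .
qed

definition defect30 :: "nat \<Rightarrow> 'a" where "defect30 j = diag30 j - x4^j"

lemma defect30_Suc: "defect30 (Suc j)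
    = x4 * defect30 j + T (-8 * int j - 4) * (x2^3 * x4^j)
    + T (-8 * int j - 4) * (x2^3 * defect30 j)"
  unfolding defect30_def diag30_Suc by (simp add: algebra_simps)

lemma x2_cube_assoc: "x2^3 * Z = x2 * (x2 * (x2 * Z))"
  by (simp add: numeral_3_eq_3 mult.assoc)

lemma span324_x2_cube_mult: "span324 a m h B Z
    \<Longrightarrow> span324 a m (h + 3) (B - 3 * int a + 3 * int m) (T (-6 * int a) * (x2^3 * Z))"
proof -
  assume g: "span324 a m h B Z"
  have "span324 a m (h + 1 + 1 + 1) (B - int a + int m - int a + int m - int a + int m)
     (T (-2 * int a) * (x2 * (T (-2 * int a) * (x2 * (T (-2 * int a) * (x2 * Z))))))"
    by (intro span324_x2_mult g)
  moreover have "T (-2 * int a) * (x2 * (T (-2 * int a) * (x2 * (T (-2 * int a) * (x2 * Z)))))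
      = T (-6 * int a) * (x2^3 * Z)"
    unfolding x2_cube_assoc by (simp only: T_pull_X T_mult_left) simp
  ultimately show ?thesis by (simp add: algebra_simps)
qed

lemma span324_defect30: "span324 a j 0 (int a * int (Suc j) - 4) (x3^a * defect30 (Suc j))"
proof (induction j)
  case 0
  have "x3^a * defect30 (Suc 0) = of_int 1 * T (-4) * (x3^(a+0) * x2^3)"
    unfolding defect30_def diag30_Suc diag30_0 by (simp add: T_pull_X_power algebra_simps)
  thus ?case by (intro span324_x2I[where s=0 and g=3 and n=1 and e="-4"]) auto
next
  case (Suc j)
  let ?c = "-8 * int (Suc j) - 4"
  have eq: "x3^a * defect30 (Suc (Suc j)) = T (2 * int a) * (x4 * (x3^a * defect30 (Suc j)))
     + T ?c * (T (-6 * int a) * (x2^3 * (x3^a * x4^(Suc j))))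
     + T ?c * (T (-6 * int a) * (x2^3 * (x3^a * defect30 (Suc j))))"
    by (simp only: defect30_Suc[of "Suc j"] distrib_left T_pull_X_power x3_power_x4_mult
        x3_power_x2_cube_mult)
  have t1: "span324 a (Suc j) 0 (int a * int (Suc (Suc j)) - 4)
      (T (2 * int a) * (x4 * (x3^a * defect30 (Suc j))))"
    using span324_x4_mult[OF Suc.IH] by (rule span324_mono) (auto simp: algebra_simps)
  have m0: "span324 a (Suc j) 0 (int a * int (Suc j)) (x3^a * x4^(Suc j))"
    by (rule span324_x4I[where s=0 and g="Suc j" and n=1 and e=0]) auto
  have t2: "span324 a (Suc j) 0 (int a * int (Suc (Suc j)) - 4)
      (T ?c * (T (-6 * int a) * (x2^3 * (x3^a * x4^(Suc j)))))"
    using span324_T_mult[OF span324_x2_cube_mult[OF m0], of ?c]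
    by (rule span324_mono) (auto simp: algebra_simps)
  have t3: "span324 a (Suc j) 0 (int a * int (Suc (Suc j)) - 4)
      (T ?c * (T (-6 * int a) * (x2^3 * (x3^a * defect30 (Suc j)))))"
    using span324_T_mult[OF span324_x2_cube_mult[OF Suc.IH], of ?c]
    by (rule span324_mono) (auto simp: algebra_simps)
  show ?case unfolding eq using t1 t2 t3 by (intro span324_add)
qed

lemma E_neg_nonneg: "E (- int i) (int g) = T (int i * int g) * (x3^i * x2^g)"
  by (simp add: stdE_def pp_def mult.assoc)
lemma E_neg_neg: "E (- int i) (- int n) = T (- (int i * int n)) * (x3^i * x0^n)"
  by (simp add: stdE_def pp_def mult.assoc)
lemma E_nonneg_nonneg: "E (int s) (int g) = T (- (int s * int g)) * (x1^s * x2^g)"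
  by (simp add: stdE_def pp_def mult.assoc)
lemma E_nonneg_neg: "E (int s) (- int n) = T (int s * int n) * (x1^s * x0^n)"
  by (simp add: stdE_def pp_def mult.assoc)

lemma x3_power_x2_power_E: "x3^i * x2^g = T (- (int i * int g)) * E (- int i) (int g)"
  by (simp add: E_neg_nonneg T_mult_left)
lemma x3_power_x0_power_E: "x3^i * x0^n = T (int i * int n) * E (- int i) (- int n)"
  by (simp add: E_neg_neg T_mult_left)
lemma Espan_of_span324:
  assumes "span324 a m h B Z"
    and "\<And>g a'. g \<le> m \<Longrightarrow> Espan (int a' * int g) (- (int a' + int g)) (- int g) (x3^a' * x4^g)"
  shows "Espan B (- (int a + int m)) (- int m) Z"
  using assms
proof (induction rule: span324.induct)
  case (span324_x2 s m h g e B n)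
  have "of_int n * T e * (x3^(a+s) * x2^g)
      = of_int n * T (e + - (int (a+s) * int g)) * E (- int (a+s)) (int g)"
    by (simp only: x3_power_x2_power_E mult.assoc T_mult_left)
  moreover have "Espan B (- (int a + int m)) (- int m)
      (of_int n * T (e + - (int (a+s) * int g)) * E (- int (a+s)) (int g))"
    using span324_x2 by (intro Espan_monomial) auto
  ultimately show ?case by simp
next
  case (span324_x4 s g m h e B n)
  have "Espan (int (a+s) * int g) (- (int (a+s) + int g)) (- int g) (x3^(a+s) * x4^g)"
    using span324_x4.prems[of g "a+s"] span324_x4.hyps(1) by simp
  thus ?case
    by (rule Espan_of_int_T_mult) (use span324_x4 in auto)
qed (auto intro: Espan.intros)

lemma x3_power_diag30: "x3^a * diag30 c = T (int a * int c) * E (- (int a + int c)) (- int c)"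
proof -
  have "x3^a * diag30 c = T (- (int c * int c)) * (x3^(a+c) * x0^c)"
    unfolding diag30_def by (simp only: T_pull_X_power power_add mult.assoc)
  also have "\<dots> = T (- (int c * int c) + int (a+c) * int c) * E (- int (a+c)) (- int c)"
    by (simp only: x3_power_x0_power_E T_mult_left)
  also have "- (int c * int c) + int (a+c) * int c = int a * int c" by (simp add: algebra_simps)
  finally show ?thesis by simp
qed

(* The second conjunct is the strengthening needed by the induction, through Espan_of_span324. *)
lemma x3_power_x4_power_Espan: "Espan (int a * int c - 1) (-(int a + int c)) (- int c)
    (x3^a * x4^c - T (int a * int c) * E (-(int a + int c)) (- int c))
   \<and> Espan (int a * int c) (-(int a + int c)) (- int c) (x3^a * x4^c)"
proof (induction c arbitrary: a rule: less_induct)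
  case (less c)
  have main: "Espan (int a * int c - 1) (-(int a + int c)) (- int c)
      (x3^a * x4^c - T (int a * int c) * E (-(int a + int c)) (- int c))"
  proof (cases c)
    case 0
    thus ?thesis using x3_power_diag30[of a 0] by (simp add: diag30_0 Espan_zero)
  next
    case (Suc j)
    have "x3^a * x4^c - T (int a * int c) * E (-(int a + int c)) (- int c)
        = - (x3^a * defect30 (Suc j))"
      unfolding x3_power_diag30[symmetric] Suc defect30_def by (simp add: algebra_simps)
    moreover have "Espan (int a * int (Suc j) - 4) (-(int a + int j)) (- int j)
        (x3^a * defect30 (Suc j))"
      using Espan_of_span324[OF span324_defect30] less Suc by force
    ultimately show ?thesis using Suc by (auto intro!: Espan_uminus elim!: Espan_mono)
  qed
  moreover have "Espan (int a * int c) (-(int a + int c)) (- int c)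
      (T (int a * int c) * E (-(int a + int c)) (- int c))"
    by (rule Espan_T_monomial) auto
  ultimately have "Espan (int a * int c) (-(int a + int c)) (- int c)
     ((x3^a * x4^c - T (int a * int c) * E (-(int a + int c)) (- int c))
         + T (int a * int c) * E (-(int a + int c)) (- int c))"
    by (intro Espan_add) (auto elim: Espan_mono)
  thus ?case using main by simp
qed

lemma x1_power_x0: "x1^i * x0 = T (-2 * int i) * (x0 * x1^i)"
  using qcommute_powers[OF commute_10, of i 1] by simp
lemma x1_power_x2: "x1^i * x2 = T (2 * int i) * (x2 * x1^i)"
  using qcommute_powers[OF commute_12, of i 1] by simp

lemma x2_power_x1_power_x0: "x2^(Suc g) * x1^i * x0
    = T (-2 * int i - 1) * (x2^g * x1^(Suc i)) + T (-2 * int i) * (x2^g * x1^i)"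
proof -
  have "x2^(Suc g) * x1^i * x0 = T (-2 * int i) * (x2^g * (x2 * x0) * x1^i)"
    by (simp only: mult.assoc x1_power_x0 power_Suc2 T_pull_X_power T_pull_X)
  also have "\<dots> = T (-2 * int i) * (T (-1) * (x2^g * (x1 * x1^i)) + x2^g * x1^i)"
    by (simp only: exchange_20 distrib_left distrib_right T_pull_X_power mult_1_left mult_1_right
        mult.assoc)
  also have "\<dots> = T (-2 * int i - 1) * (x2^g * x1^(Suc i)) + T (-2 * int i) * (x2^g * x1^i)"
    by (simp only: distrib_left T_mult_left power_Suc mult.assoc diff_conv_add_uminus)
  finally show ?thesis .
qed

lemma x2_0_x1_power_x0: "x2^0 * x1^i * x0 = T (-2 * int i) * (x0^1 * x1^i)"
  by (simp add: x1_power_x0)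

lemma x0_power_x1_power_x0: "x0^g * x1^i * x0 = T (-2 * int i) * (x0^(Suc g) * x1^i)"
  by (simp only: mult.assoc x1_power_x0 T_pull_X_power; simp only: power_Suc2 mult.assoc)

lemma x2_power_x1_power_x2: "x2^g * x1^i * x2 = T (2 * int i) * (x2^(Suc g) * x1^i)"
  by (simp only: mult.assoc x1_power_x2 T_pull_X_power; simp only: power_Suc2 mult.assoc)

lemma x0_power_x1_power_x2: "x0^(Suc g) * x1^i * x2
    = T (2 * int i + 1) * (x0^g * x1^(Suc i)) + T (2 * int i) * (x0^g * x1^i)"
proof -
  have "x0^(Suc g) * x1^i * x2 = T (2 * int i) * (x0^g * (x0 * x2) * x1^i)"
    by (simp only: mult.assoc x1_power_x2 power_Suc2 T_pull_X_power T_pull_X)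
  also have "\<dots> = T (2 * int i) * (T 1 * (x0^g * (x1 * x1^i)) + x0^g * x1^i)"
    by (simp only: exchange_02 distrib_left distrib_right T_pull_X_power mult_1_left mult_1_right
        mult.assoc)
  also have "\<dots> = T (2 * int i + 1) * (x0^g * x1^(Suc i)) + T (2 * int i) * (x0^g * x1^i)"
    by (simp only: distrib_left T_mult_left power_Suc mult.assoc)
  finally show ?thesis .
qed

lemma x0_0_x1_power_x2: "x0^0 * x1^i * x2 = T (2 * int i) * (x2^1 * x1^i)"
  by (simp add: x1_power_x2)

(* The mirror image of span324, closed under right multiplication by x0 and x2. *)
inductive span201 :: "nat \<Rightarrow> nat \<Rightarrow> int \<Rightarrow> 'a \<Rightarrow> bool" for k where
  span201_zero: "span201 k m B 0"
| span201_x2: "s \<le> m \<Longrightarrow> e - int (k+s) * int g \<le> B \<Longrightarrow>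
       span201 k m B (of_int n * T e * (x2^g * x1^(k+s)))"
| span201_x0: "s + g \<le> m \<Longrightarrow> e + int (k+s) * int g \<le> B \<Longrightarrow>
       span201 k m B (of_int n * T e * (x0^g * x1^(k+s)))"
| span201_add: "span201 k m B x \<Longrightarrow> span201 k m B y \<Longrightarrow> span201 k m B (x + y)"

lemma span201_mono: "span201 k m B Z \<Longrightarrow> m \<le> m' \<Longrightarrow> B \<le> B' \<Longrightarrow> span201 k m' B' Z"
  by (induction rule: span201.induct) (auto intro: span201.intros)

lemma span201_T_mult: "span201 k m B Z \<Longrightarrow> span201 k m (B + c) (T c * Z)"
  by (induction rule: span201.induct) (auto simp: T_of_int_mult distrib_left intro: span201.intros)

lemma span201_x2I: "s \<le> m \<Longrightarrow> e - int (k+s) * int g \<le> B \<Longrightarrow>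
       Z = of_int n * T e * (x2^g * x1^(k+s)) \<Longrightarrow> span201 k m B Z"
  using span201_x2 by simp
lemma span201_x0I: "s + g \<le> m \<Longrightarrow> e + int (k+s) * int g \<le> B \<Longrightarrow>
       Z = of_int n * T e * (x0^g * x1^(k+s)) \<Longrightarrow> span201 k m B Z"
  using span201_x0 by simp

lemma T_of_int_mult_right: "T c * ((of_int n * T e * Y) * x) = of_int n * T (c + e) * (Y * x)"
  by (simp only: mult.assoc[of "of_int n * T e"] T_of_int_mult)

lemma span201_mult_x0: "span201 k m B Z \<Longrightarrow> span201 k (Suc m) (B + int k) (T (2 * int k) * (Z * x0))"
proof (induction rule: span201.induct)
  case (span201_zero m B) thus ?case by (simp add: span201.span201_zero)
next
  case (span201_x2 s m e g B n)
  show ?case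
  proof (cases g)
    case 0
    have "T (2 * int k) * (of_int n * T e * (x2^g * x1^(k+s)) * x0)
        = of_int n * T (2 * int k + e + -2 * int (k+s)) * (x0^1 * x1^(k+s))"
      unfolding T_of_int_mult_right 0 x2_0_x1_power_x0 by (simp only: mult.assoc T_mult_left)
    thus ?thesis using span201_x2 0
      by (intro span201_x0I[where s=s and g=1]) (auto simp: algebra_simps)
  next
    case (Suc g')
    have "T (2 * int k) * (of_int n * T e * (x2^g * x1^(k+s)) * x0) =
      of_int n * T (2 * int k + e + (-2 * int (k+s) - 1)) * (x2^g' * x1^(k + Suc s))
          + of_int n * T (2 * int k + e + -2 * int (k+s)) * (x2^g' * x1^(k+s))"
      unfolding T_of_int_mult_right Suc x2_power_x1_power_x0 of_int_T_distrib by simp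
    moreover have "span201 k (Suc m) (B + int k)
        (of_int n * T (2 * int k + e + (-2 * int (k+s) - 1)) * (x2^g' * x1^(k + Suc s)))"
      using span201_x2 Suc
      by (intro span201_x2I[where s="Suc s" and g=g']) (auto simp: algebra_simps)
    moreover have "span201 k (Suc m) (B + int k)
        (of_int n * T (2 * int k + e + -2 * int (k+s)) * (x2^g' * x1^(k+s)))"
      using span201_x2 Suc by (intro span201_x2I[where s=s and g=g']) (auto simp: algebra_simps)
    ultimately show ?thesis by (simp add: span201.span201_add)
  qed
next
  case (span201_x0 s g m e B n)
  have "T (2 * int k) * (of_int n * T e * (x0^g * x1^(k+s)) * x0)
      = of_int n * T (2 * int k + e + -2 * int (k+s)) * (x0^(Suc g) * x1^(k+s))"
    unfolding T_of_int_mult_right x0_power_x1_power_x0 by (simp only: mult.assoc T_mult_left)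
  thus ?case using span201_x0
    by (intro span201_x0I[where s=s and g="Suc g"]) (auto simp: algebra_simps)
next
  case (span201_add m B x y) thus ?case
    by (simp add: distrib_left distrib_right span201.span201_add)
qed

lemma span201_mult_x2: "span201 k m B Z
    \<Longrightarrow> span201 k m (B - int k + int m) (T (-2 * int k) * (Z * x2))"
proof (induction rule: span201.induct)
  case (span201_zero m B) thus ?case by (simp add: span201.span201_zero)
next
  case (span201_x2 s m e g B n)
  have "T (-2 * int k) * (of_int n * T e * (x2^g * x1^(k+s)) * x2)
      = of_int n * T (-2 * int k + e + 2 * int (k+s)) * (x2^(Suc g) * x1^(k+s))"
    unfolding T_of_int_mult_right x2_power_x1_power_x2 by (simp only: mult.assoc T_mult_left)
  thus ?case using span201_x2
    by (intro span201_x2I[where s=s and g="Suc g"]) (auto simp: algebra_simps)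
next
  case (span201_x0 s g m e B n)
  show ?case
  proof (cases g)
    case 0
    have "T (-2 * int k) * (of_int n * T e * (x0^g * x1^(k+s)) * x2)
        = of_int n * T (-2 * int k + e + 2 * int (k+s)) * (x2^1 * x1^(k+s))"
      unfolding T_of_int_mult_right 0 x0_0_x1_power_x2 by (simp only: mult.assoc T_mult_left)
    thus ?thesis using span201_x0 0
      by (intro span201_x2I[where s=s and g=1]) (auto simp: algebra_simps)
  next
    case (Suc g')
    have "T (-2 * int k) * (of_int n * T e * (x0^g * x1^(k+s)) * x2) =
      of_int n * T (-2 * int k + e + (2 * int (k+s) + 1)) * (x0^g' * x1^(k + Suc s))
          + of_int n * T (-2 * int k + e + 2 * int (k+s)) * (x0^g' * x1^(k+s))"
      unfolding T_of_int_mult_right Suc x0_power_x1_power_x2 of_int_T_distrib by simp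
    moreover have "span201 k m (B - int k + int m)
        (of_int n * T (-2 * int k + e + (2 * int (k+s) + 1)) * (x0^g' * x1^(k + Suc s)))"
      using span201_x0 Suc
      by (intro span201_x0I[where s="Suc s" and g=g']) (auto simp: algebra_simps)
    moreover have "span201 k m (B - int k + int m)
        (of_int n * T (-2 * int k + e + 2 * int (k+s)) * (x0^g' * x1^(k+s)))"
      using span201_x0 Suc by (intro span201_x0I[where s=s and g=g']) (auto simp: algebra_simps)
    ultimately show ?thesis by (simp add: span201.span201_add)
  qed
next
  case (span201_add m B x y) thus ?case
    by (simp add: distrib_left distrib_right span201.span201_add)
qed

lemma x0_x1_power: "x0 * x1^j = T (2 * int j) * (x1^j * x0)" using x0_power_x1_power[of 1 j] by simp
lemma x2_cube_x1_power: "x2^3 * x1^j = T (-6 * int j) * (x1^j * x2^3)"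
  using x2_power_x1_power[of 3 j] by simp

(* diag41 j = mu_1 E_(-j,-j), expanded like diag30 but by right multiplication. *)
definition diag41 :: "nat \<Rightarrow> 'a" where "diag41 j = T (- (int j * int j)) * (x4^j * x1^j)"

lemma diag41_0: "diag41 0 = 1" by (simp add: diag41_def)

lemma diag41_Suc: "diag41 (Suc j) = diag41 j * (x0 + T (-8 * int j - 4) * x2^3)"
proof -
  have "diag41 (Suc j) = T (- ((int j + 1) * (int j + 1))) * (x4^j * (x4 * x1) * x1^j)"
    unfolding diag41_def
    by (simp only: power_Suc2[of x4 j] power_Suc[of x1 j] of_nat_Suc add.commute[of 1] mult.assoc)
  also have "\<dots> = diag41 j * (x0 + T (-8 * int j - 4) * x2^3)"
    unfolding diag41_def
    by (simp only: exchange_41 distrib_left distrib_right mult.assoc T_pull_X_power T_pull_X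
        x0_x1_power x2_cube_x1_power T_mult_left)
      (rule arg_cong2[where f="(+)"]; rule arg_cong[where f="\<lambda>e. T e * _"]; simp add: algebra_simps)
  finally show ?thesis .
qed

definition defect41 :: "nat \<Rightarrow> 'a" where "defect41 j = diag41 j - x0^j"

lemma defect41_Suc: "defect41 (Suc j)
    = defect41 j * x0 + T (-8 * int j - 4) * (x0^j * x2^3)
    + T (-8 * int j - 4) * (defect41 j * x2^3)"
proof -
  have "defect41 (Suc j) = (defect41 j + x0^j) * (x0 + T (-8 * int j - 4) * x2^3) - x0^j * x0"
    unfolding defect41_def diag41_Suc by (simp add: power_commutes)
  also have "\<dots>
      = defect41 j * x0 + T (-8 * int j - 4) * (x0^j * x2^3)
      + T (-8 * int j - 4) * (defect41 j * x2^3)"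
    by (simp add: distrib_left distrib_right T_pull_left[of "defect41 j"] T_pull_left[of "x0^j"]
        algebra_simps)
  finally show ?thesis .
qed

lemma mult_x2_cube_assoc: "Z * x2^3 = Z * x2 * x2 * x2"
  by (simp add: numeral_3_eq_3 mult.assoc)

lemma span201_mult_x2_cube: "span201 k m B Z
    \<Longrightarrow> span201 k m (B - 3 * int k + 3 * int m) (T (-6 * int k) * (Z * x2^3))"
proof -
  assume g: "span201 k m B Z"
  have "span201 k m (B - int k + int m - int k + int m - int k + int m)
     (T (-2 * int k) * ((T (-2 * int k) * ((T (-2 * int k) * (Z * x2)) * x2)) * x2))"
    by (intro span201_mult_x2 g)
  moreover have "T (-2 * int k) * ((T (-2 * int k) * ((T (-2 * int k) * (Z * x2)) * x2)) * x2)
      = T (-6 * int k) * (Z * x2^3)"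
    unfolding mult_x2_cube_assoc by (simp only: mult.assoc T_mult_left) simp
  ultimately show ?thesis by (simp add: algebra_simps)
qed

lemma mult_x0_x1_power: "Z * x0 * x1^k = T (2 * int k) * (Z * x1^k * x0)"
  by (simp only: mult.assoc x0_x1_power T_pull_left[of Z])
lemma mult_x2_cube_x1_power: "Z * x2^3 * x1^k = T (-6 * int k) * (Z * x1^k * x2^3)"
  by (simp only: mult.assoc x2_cube_x1_power T_pull_left[of Z])

lemma span201_defect41: "span201 k j (int k * int (Suc j) - 4) (defect41 (Suc j) * x1^k)"
proof (induction j)
  case 0
  have "defect41 (Suc 0) * x1^k = of_int 1 * T (-4) * (x2^3 * x1^(k+0))"
    unfolding defect41_def diag41_Suc diag41_0 by (simp add: algebra_simps)
  thus ?case by (intro span201_x2I[where s=0 and g=3 and n=1 and e="-4"]) auto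
next
  case (Suc j)
  let ?c = "-8 * int (Suc j) - 4"
  have eq: "defect41 (Suc (Suc j)) * x1^k = T (2 * int k) * (defect41 (Suc j) * x1^k * x0)
     + T ?c * (T (-6 * int k) * (x0^(Suc j) * x1^k * x2^3))
     + T ?c * (T (-6 * int k) * (defect41 (Suc j) * x1^k * x2^3))"
  proof -
    have "defect41 (Suc (Suc j)) * x1^k
        = defect41 (Suc j) * x0 * x1^k + T ?c * (x0^(Suc j) * x2^3 * x1^k)
        + T ?c * (defect41 (Suc j) * x2^3 * x1^k)"
      by (simp only: defect41_Suc[of "Suc j"] distrib_right mult.assoc)
    thus ?thesis by (simp only: mult_x0_x1_power mult_x2_cube_x1_power)
  qed
  have t1: "span201 k (Suc j) (int k * int (Suc (Suc j)) - 4)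
      (T (2 * int k) * (defect41 (Suc j) * x1^k * x0))"
    using span201_mult_x0[OF Suc.IH] by (rule span201_mono) (auto simp: algebra_simps)
  have m0: "span201 k (Suc j) (int k * int (Suc j)) (x0^(Suc j) * x1^k)"
    by (rule span201_x0I[where s=0 and g="Suc j" and n=1 and e=0]) auto
  have t2: "span201 k (Suc j) (int k * int (Suc (Suc j)) - 4)
      (T ?c * (T (-6 * int k) * (x0^(Suc j) * x1^k * x2^3)))"
    using span201_T_mult[OF span201_mult_x2_cube[OF m0], of ?c]
    by (rule span201_mono) (auto simp: algebra_simps)
  have t3: "span201 k (Suc j) (int k * int (Suc (Suc j)) - 4)
      (T ?c * (T (-6 * int k) * (defect41 (Suc j) * x1^k * x2^3)))"
    using span201_T_mult[OF span201_mult_x2_cube[OF Suc.IH], of ?c]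
    by (rule span201_mono) (auto simp: algebra_simps)
  show ?case unfolding eq using t1 t2 t3 by (intro span201_add)
qed

lemma x2_power_x1_power_E: "x2^g * x1^i = T (- (int i * int g)) * E (int i) (int g)"
  by (simp add: E_nonneg_nonneg x2_power_x1_power T_mult_left algebra_simps)
lemma x0_power_x1_power_E: "x0^g * x1^i = T (int i * int g) * E (int i) (- int g)"
  by (simp add: E_nonneg_neg x0_power_x1_power T_mult_left algebra_simps)

lemma Espan_of_span201: "span201 k m B Z \<Longrightarrow> Espan B 0 (- int m) Z"
proof (induction rule: span201.induct)
  case (span201_zero m B) thus ?case by (simp add: Espan_zero)
next
  case (span201_x2 s m e g B n)
  have "of_int n * T e * (x2^g * x1^(k+s))
      = of_int n * T (e + - (int (k+s) * int g)) * E (int (k+s)) (int g)"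
    by (simp only: x2_power_x1_power_E mult.assoc T_mult_left)
  moreover have "Espan B 0 (- int m)
      (of_int n * T (e + - (int (k+s) * int g)) * E (int (k+s)) (int g))"
    using span201_x2 by (intro Espan_monomial) auto
  ultimately show ?case by simp
next
  case (span201_x0 s g m e B n)
  have "of_int n * T e * (x0^g * x1^(k+s))
      = of_int n * T (e + int (k+s) * int g) * E (int (k+s)) (- int g)"
    by (simp only: x0_power_x1_power_E mult.assoc T_mult_left)
  moreover have "Espan B 0 (- int m)
      (of_int n * T (e + int (k+s) * int g) * E (int (k+s)) (- int g))"
    using span201_x0 by (intro Espan_monomial) auto
  ultimately show ?case by simp
next
  case (span201_add m B x y) thus ?case by (simp add: Espan_add)
qed

lemma word3120_mult_x0_x1_Espan:
  "Espan ((int i - int s + int p) * (int (n + q) - int j)) (- int i) (- int (n + q))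
    (word3120 i s j n * x0^q * x1^p)"
proof -
  have "(int i - int (s + p)) * (int (n + q) - int j) + 2 * int p * (int (n + q) - int j)
      = (int i - int s + int p) * (int (n + q) - int j)"
    by (simp add: algebra_simps)
  thus ?thesis
    using Espan_T_mult[OF word3120_Espan, of i "s + p" "n + q" j
        "2 * int p * (int (n + q) - int j)"]
    by (simp only: word3120_mult_x0_x1)
qed

lemma x3_power_x2_power_mult_x0_x1_Espan:
  "Espan ((int s + int r) * (int q - int g)) (- int s) (- int q) (x3^s * x2^g * x0^q * x1^r)"
  using word3120_mult_x0_x1_Espan[of s 0 r 0 q g] by (simp add: word3120_def)

lemma span324_mult_x0_x1_Espan:
  assumes "span324 0 m h B Z"
    and "\<And>g a. g \<le> m \<Longrightarrow> Espan (int a * int g) (- (int a + int g)) (- int g) (x3^a * x4^g)"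
  shows "Espan (B + int r * int q + int r * int m + int m * int q) (- int m) (- (int m + int q))
    (Z * x0^q * x1^r)"
  using assms
proof (induction rule: span324.induct)
  case (span324_x2 s m h g e B n)
  note x3_power_x2_power_mult_x0_x1_Espan[of s r q g]
  moreover have "(int s + int r) * (int q - int g) + e
      \<le> B + int r * int q + int r * int m + int m * int q"
  proof -
    have "int s * int q \<le> int m * int q" "0 \<le> int r * int g" "0 \<le> int r * int m"
      using span324_x2 by (auto intro: mult_right_mono)
    moreover have "(int s + int r) * (int q - int g)
        = int s * int q - int s * int g + int r * int q - int r * int g"
      by (simp add: algebra_simps)
    moreover have "e - int s * int g \<le> B"
      using span324_x2 by simp
    ultimately show ?thesis by linarith
  qed
  ultimately have "Espan (B + int r * int q + int r * int m + int m * int q) (- int m)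
      (- (int m + int q)) (of_int n * T e * (x3^s * x2^g * x0^q * x1^r))"
    by (rule Espan_of_int_T_mult) (use span324_x2 in auto)
  thus ?case by (simp add: mult.assoc)
next
  case (span324_x4 s g m h e B n)
  have "Espan (int s * int g + int r * int q - int r * - int g - - (int s + int g) * int q)
      (- (int s + int g)) (- int g - int q) (x3^s * x4^g * x0^q * x1^r)"
    using span324_x4 by (intro Espan_mult_x0_x1_power) auto
  moreover have "int s * int g + int r * int q - int r * - int g - - (int s + int g) * int q + e
      \<le> B + int r * int q + int r * int m + int m * int q"
  proof -
    have "int r * int g \<le> int r * int m" "(int s + int g) * int q \<le> int m * int q"
      using span324_x4 by (auto intro: mult_left_mono mult_right_mono)
    moreover have "e + int s * int g \<le> B"
      using span324_x4 by simp
    ultimately show ?thesis by (simp add: algebra_simps)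
  qed
  ultimately have "Espan (B + int r * int q + int r * int m + int m * int q) (- int m)
      (- (int m + int q)) (of_int n * T e * (x3^s * x4^g * x0^q * x1^r))"
    by (rule Espan_of_int_T_mult) (use span324_x4 in auto)
  thus ?case by (simp add: mult.assoc)
qed (auto simp: distrib_right intro: Espan.intros)

definition Espan_any_a :: "int \<Rightarrow> int \<Rightarrow> 'a \<Rightarrow> bool" where
  "Espan_any_a d b0 x \<longleftrightarrow> (\<exists>a0. Espan d a0 b0 x)"

lemma Espan_any_aI: "Espan d a0 b0 x \<Longrightarrow> Espan_any_a d b0 x"
  unfolding Espan_any_a_def by blast

lemma Espan_any_a_mono: "Espan_any_a d b0 x \<Longrightarrow> d \<le> d' \<Longrightarrow> b0' \<le> b0 \<Longrightarrow> Espan_any_a d' b0' x"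
  unfolding Espan_any_a_def using Espan_mono by blast

lemma Espan_any_a_add: "Espan_any_a d b0 x \<Longrightarrow> Espan_any_a d b0 y \<Longrightarrow> Espan_any_a d b0 (x + y)"
  unfolding Espan_any_a_def by (meson Espan_add Espan_mono min.cobounded1 min.cobounded2 order_refl)

lemma Espan_any_a_diff: "Espan_any_a d b0 x \<Longrightarrow> Espan_any_a d b0 y \<Longrightarrow> Espan_any_a d b0 (x - y)"
  unfolding Espan_any_a_def
  by (meson Espan_diff Espan_mono min.cobounded1 min.cobounded2 order_refl)

lemma Espan_any_a_T_mult: "Espan_any_a d b0 x \<Longrightarrow> d + k \<le> d' \<Longrightarrow> Espan_any_a d' b0 (T k * x)"
  unfolding Espan_any_a_def using Espan_T_mult_mono by blast

lemma Espan_any_a_of_int_T_mult: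
  "Espan_any_a d b0 x \<Longrightarrow> d + e \<le> d' \<Longrightarrow> b0' \<le> b0 \<Longrightarrow> Espan_any_a d' b0' (of_int n * T e * x)"
  unfolding Espan_any_a_def using Espan_of_int_T_mult by blast

lemma span324_mult_x1_Espan_any_a:
  assumes "span324 0 m h B Z"
    and "\<And>g. int g \<le> int m - h \<Longrightarrow> Espan_any_a (int r * int g) (- int g) (x4^g * x1^r)"
  shows "Espan_any_a (B + int r * (int m - h)) (- int m) (Z * x1^r)"
  using assms
proof (induction rule: span324.induct)
  case (span324_zero m h B)
  thus ?case by (auto intro: Espan_any_aI Espan_zero)
next
  case (span324_x2 s m h g e B n)
  have "Espan_any_a ((int s + int r) * (- int g)) 0 (x3^s * x2^g * x1^r)"
    using x3_power_x2_power_mult_x0_x1_Espan[of s r 0 g] by (auto intro: Espan_any_aI)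
  moreover have "int r * (- int g) \<le> int r * (int m - h)"
    using span324_x2 by (intro mult_left_mono) auto
  ultimately have "Espan_any_a (B + int r * (int m - h)) (- int m)
      (of_int n * T e * (x3^s * x2^g * x1^r))"
    using span324_x2 by (elim Espan_any_a_of_int_T_mult) (auto simp: algebra_simps)
  thus ?case by (simp add: mult.assoc)
next
  case (span324_x4 s g m h e B n)
  have "Espan_any_a (int r * int g) (- int g) (x4^g * x1^r)"
    using span324_x4 by simp
  then obtain a0 where "Espan (int r * int g) a0 (- int g) (x4^g * x1^r)"
    unfolding Espan_any_a_def by blast
  hence "Espan (int r * int g - int s * - int g) (min a0 0 - int s) (- int g)
      (x3^s * (x4^g * x1^r))"
    by (intro Espan_x3_power_mult) (auto elim: Espan_mono)
  moreover have "int r * int g \<le> int r * (int m - h)"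
    using span324_x4 by (intro mult_left_mono) auto
  ultimately have "Espan_any_a (B + int r * (int m - h)) (- int m)
      (of_int n * T e * (x3^s * (x4^g * x1^r)))"
    using span324_x4 by (intro Espan_any_a_of_int_T_mult[OF Espan_any_aI]) auto
  thus ?case by (simp add: mult.assoc)
qed (simp add: distrib_right Espan_any_a_add)

lemma x4_power_x2_power_span324: "span324 0 p (int g) 0 (x4^p * x2^g)"
proof (induction p)
  case 0
  show ?case by (rule span324_x2I[where s=0 and g=g and n=1 and e=0]) auto
next
  case (Suc p)
  show ?case using span324_x4_mult[OF Suc.IH] by (simp add: mult.assoc)
qed

lemma diag30_mult_x0_x1_Espan:
  "Espan (int p * int s + int p * int g + int s * int g) (- int p) (- int (p + g))
      (diag30 p * x0^g * x1^s)"
proof -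
  have "Espan ((int p + int s) * int (p + g) + - (int p * int p)) (- int p) (- int (p + g))
      (T (- (int p * int p)) * (word3120 p 0 0 p * x0^g * x1^s))"
    using Espan_T_mult[OF word3120_mult_x0_x1_Espan[of p 0 s p g 0], of "- (int p * int p)"] by simp
  moreover have "(int p + int s) * int (p + g) + - (int p * int p)
      = int p * int s + int p * int g + int s * int g"
    by (simp add: algebra_simps)
  ultimately show ?thesis by (simp add: diag30_def word3120_def mult.assoc)
qed

lemma x4_power_x0_power_x1_power_Espan:
  "Espan (int (Suc p) * int (s + g) + int s * int g) (- int (Suc p)) (- int (Suc p + g))
    (x4^Suc p * x0^g * x1^s)"
proof -
  have "Espan (- 4 + int s * int g + int s * int p + int p * int g) (- int p) (- (int p + int g))
      (defect30 (Suc p) * x0^g * x1^s)"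
    using span324_mult_x0_x1_Espan[OF span324_defect30[of 0 p]] x3_power_x4_power_Espan by simp
  hence "Espan (int (Suc p) * int (s + g) + int s * int g) (- int (Suc p)) (- int (Suc p + g))
      (defect30 (Suc p) * x0^g * x1^s)"
    by (rule Espan_mono) (auto simp: algebra_simps)
  moreover have "Espan (int (Suc p) * int (s + g) + int s * int g) (- int (Suc p))
      (- int (Suc p + g))
      (diag30 (Suc p) * x0^g * x1^s)"
    using diag30_mult_x0_x1_Espan[of "Suc p" s g] by (simp add: algebra_simps)
  ultimately show ?thesis
    using Espan_diff by (fastforce simp: defect30_def left_diff_distrib)
qed

lemma x4_power_span201_Espan_any_a:
  assumes "span201 0 m B Z"
    and "\<And>g u. g \<le> Suc p \<Longrightarrow> Espan_any_a (int u * int g) (- int g) (x4^g * x1^u)"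
  shows "Espan_any_a (B + int (Suc p) * int m) (- (int (Suc p) + int m)) (x4^Suc p * Z)"
  using assms(1)
proof (induction rule: span201.induct)
  case (span201_zero m B)
  show ?case by (auto intro: Espan_any_aI Espan_zero)
next
  case (span201_x2 s m e g B n)
  have "Espan_any_a (0 + int s * (int (Suc p) - int g)) (- int (Suc p)) (x4^Suc p * x2^g * x1^s)"
    by (rule span324_mult_x1_Espan_any_a[OF x4_power_x2_power_span324]) (use assms(2) in auto)
  moreover have "int s * int (Suc p) \<le> int m * int (Suc p)"
    using span201_x2 by (intro mult_right_mono) auto
  ultimately have "Espan_any_a (B + int (Suc p) * int m) (- (int (Suc p) + int m))
      (of_int n * T e * (x4^Suc p * x2^g * x1^s))"
    using span201_x2 by (elim Espan_any_a_of_int_T_mult) (auto simp: algebra_simps)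
  thus ?case unfolding of_int_T_pull_left by (simp add: mult.assoc)
next
  case (span201_x0 s g m e B n)
  have "int (Suc p) * int (s + g) \<le> int (Suc p) * int m"
    using span201_x0 by (intro mult_left_mono) auto
  hence "Espan_any_a (B + int (Suc p) * int m) (- (int (Suc p) + int m))
      (of_int n * T e * (x4^Suc p * x0^g * x1^s))"
    using span201_x0 x4_power_x0_power_x1_power_Espan[of p s g]
    by (intro Espan_any_a_of_int_T_mult[OF Espan_any_aI]) (auto simp: algebra_simps)
  thus ?case unfolding of_int_T_pull_left by (simp add: mult.assoc)
qed (simp add: distrib_left Espan_any_a_add)

subsection \<open>Comparing mu_1 E_(a,b) with E_psi(a,b)\<close>

lemma mu1E_neg_neg: "mu1E t X (- int u) (- int c) = T (- (int u * int c)) * (x4^c * x1^u)"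
  by (simp add: mu1E_def pp_def mult.assoc)

lemma x4_power_x1_power_diag41: "x4^c * x1^c = T (int c * int c) * (x0^c + defect41 c)"
  by (simp add: defect41_def diag41_def T_mult_left)

lemma mu1E_sub_E_eq_defect41:
  assumes u: "u = c + k"
  shows "mu1E t X (- int u) (- int c) - E (int u - int c) (- int c)
    = T (- (int k * int c)) * (defect41 c * x1^k)"
proof -
  have "mu1E t X (- int u) (- int c) = T (- (int u * int c)) * ((x4^c * x1^c) * x1^k)"
    unfolding mu1E_neg_neg u by (simp add: power_add mult.assoc)
  also have "\<dots> = T (- (int u * int c) + int c * int c) * (x0^c * x1^k + defect41 c * x1^k)"
    unfolding x4_power_x1_power_diag41 by (simp only: mult.assoc T_mult_left distrib_right)
  also have "- (int u * int c) + int c * int c = - (int k * int c)" unfolding u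
    by (simp add: algebra_simps)
  finally have m: "mu1E t X (- int u) (- int c)
      = T (- (int k * int c)) * (x0^c * x1^k + defect41 c * x1^k)" .
  have "E (int u - int c) (- int c) = T (int k * int c) * (x1^k * x0^c)"
    using E_nonneg_neg[of k c] u by simp
  also have "\<dots> = T (- (int k * int c)) * (x0^c * x1^k)"
  proof -
    have "x1^k * x0^c = T (-2 * int c * int k) * (x0^c * x1^k)"
      using x0_power_x1_power[of c k] by (simp add: T_mult_left)
    hence "T (int k * int c) * (x1^k * x0^c)
        = T (int k * int c + -2 * int c * int k) * (x0^c * x1^k)"
      by (simp only: T_mult_left)
    also have "int k * int c + -2 * int c * int k = - (int k * int c)" by (simp add: algebra_simps)
    finally show ?thesis .
  qed
  finally have s: "E (int u - int c) (- int c) = T (- (int k * int c)) * (x0^c * x1^k)" .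
  show ?thesis unfolding m s by (simp add: distrib_left)
qed

lemma mu1E_sub_E_eq_defect30_defect41:
  assumes c: "c = p + u"
  shows "mu1E t X (- int u) (- int c) - E (int u - int c) (- int c)
    = T (- (int u * int p)) * (x4^p * defect41 u - defect30 p * x0^u)"
proof -
  have "mu1E t X (- int u) (- int c) = T (- (int u * int c)) * (x4^p * (x4^u * x1^u))"
    unfolding mu1E_neg_neg c by (simp add: power_add mult.assoc)
  also have "\<dots> = T (- (int u * int c) + int u * int u) * (x4^p * x0^u + x4^p * defect41 u)"
    unfolding x4_power_x1_power_diag41
    by (simp only: mult.assoc T_pull_left[of "x4^p"] T_mult_left distrib_left)
  also have "x4^p * x0^u = T (- (int p * int p)) * (x3^p * x0^c) - defect30 p * x0^u"
    unfolding defect30_def diag30_def c by (simp add: power_add mult.assoc left_diff_distrib)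
  also have "- (int u * int c) + int u * int u = - (int u * int p)" unfolding c
    by (simp add: algebra_simps)
  finally have m: "mu1E t X (- int u) (- int c)
      = T (- (int u * int p)) *
      (T (- (int p * int p)) * (x3^p * x0^c) - defect30 p * x0^u + x4^p * defect41 u)" .
  have s: "E (int u - int c) (- int c)
      = T (- (int u * int p)) * (T (- (int p * int p)) * (x3^p * x0^c))"
  proof -
    have "E (int u - int c) (- int c) = T (- (int p * int c)) * (x3^p * x0^c)"
      using E_neg_neg[of p c] c by simp
    also have "- (int p * int c) = - (int u * int p) + - (int p * int p)" unfolding c
      by (simp add: algebra_simps)
    finally show ?thesis by (simp add: T_mult_left)
  qed
  show ?thesis unfolding m s by (simp add: algebra_simps)
qed

lemma x4_power_x1_power_Espan_any_a:
  assumes "Espan_any_a (-1) (- int g) (mu1E t X (- int u) (- int g) - E (int u - int g) (- int g))"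
  shows "Espan_any_a (int u * int g) (- int g) (x4^g * x1^u)"
proof -
  have "x4^g * x1^u = T (int u * int g) * E (int u - int g) (- int g)
      + T (int u * int g) * (mu1E t X (- int u) (- int g) - E (int u - int g) (- int g))"
    by (simp add: mu1E_neg_neg T_mult_left right_diff_distrib)
  moreover have "Espan_any_a (int u * int g) (- int g)
      (T (int u * int g) * E (int u - int g) (- int g))"
    by (rule Espan_any_aI[OF Espan_T_monomial[of _ _ "int u - int g"]]) auto
  moreover have "Espan_any_a (int u * int g) (- int g)
      (T (int u * int g) * (mu1E t X (- int u) (- int g) - E (int u - int g) (- int g)))"
    using assms by (rule Espan_any_a_T_mult) simp
  ultimately show ?thesis by (simp add: Espan_any_a_add)
qed

lemma mu1E_sub_E_Espan_any_a_ge: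
  assumes "c \<le> u"
  shows "Espan_any_a (-1) (- int c) (mu1E t X (- int u) (- int c) - E (int u - int c) (- int c))"
proof (cases c)
  case 0
  thus ?thesis by (simp add: mu1E_def stdE_def pp_def Espan_any_aI Espan_zero)
next
  case (Suc c')
  obtain k where u: "u = c + k"
    using assms le_Suc_ex by blast
  have "Espan (int k * int c - 4) 0 (- int c') (defect41 c * x1^k)"
    using Espan_of_span201[OF span201_defect41[of k c']] Suc by simp
  hence "Espan (-1) 0 (- int c') (T (- (int k * int c)) * (defect41 c * x1^k))"
    by (rule Espan_T_mult_mono) simp
  hence "Espan (-1) 0 (- int c) (T (- (int k * int c)) * (defect41 c * x1^k))"
    by (rule Espan_mono) (simp_all add: Suc)
  thus ?thesis
    unfolding mu1E_sub_E_eq_defect41[OF u] by (rule Espan_any_aI)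
qed

lemma mu1E_sub_E_Espan_any_a_0:
  "Espan_any_a (-1) (- int c) (mu1E t X 0 (- int c) - E (- int c) (- int c))"
  using x3_power_x4_power_Espan[of 0 c] mu1E_neg_neg[of 0 c] by (auto intro: Espan_any_aI)

lemma mu1E_sub_E_Espan_any_a_less:
  assumes "0 < u" and "u < c"
    and IH: "\<And>g u'. g < c \<Longrightarrow> Espan_any_a (int u' * int g) (- int g) (x4^g * x1^u')"
  shows "Espan_any_a (-1) (- int c) (mu1E t X (- int u) (- int c) - E (int u - int c) (- int c))"
proof -
  obtain p where c: "c = Suc p + u"
    using assms(2) by (auto dest!: less_imp_Suc_add)
  obtain u' where u: "u = Suc u'"
    using assms(1) gr0_implies_Suc by blast
  have "Espan_any_a (int u'' * int g) (- int g) (x4^g * x1^u'')" if "g \<le> Suc p" for g u''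
    using that c u by (intro IH) simp
  hence "Espan_any_a (- 4 + int (Suc p) * int u') (- (int (Suc p) + int u'))
      (x4^Suc p * defect41 u)"
    using x4_power_span201_Espan_any_a[OF span201_defect41[of 0 u'], of p] u by simp
  hence "Espan_any_a (int u * int (Suc p) - 1) (- int c) (x4^Suc p * defect41 u)"
    by (rule Espan_any_a_mono) (auto simp: c u algebra_simps)
  moreover have "Espan (- 4 + int p * int u) (- int p) (- (int p + int u))
      (defect30 (Suc p) * x0^u)"
    using span324_mult_x0_x1_Espan[OF span324_defect30[of 0 p], of 0 u] x3_power_x4_power_Espan
    by simp
  hence "Espan_any_a (int u * int (Suc p) - 1) (- int c) (defect30 (Suc p) * x0^u)"
    by (auto simp: c algebra_simps elim!: Espan_mono intro!: Espan_any_aI)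
  ultimately have "Espan_any_a (-1) (- int c)
      (T (- (int u * int (Suc p))) * (x4^Suc p * defect41 u - defect30 (Suc p) * x0^u))"
    by (intro Espan_any_a_T_mult[OF Espan_any_a_diff]) auto
  thus ?thesis
    by (simp only: mu1E_sub_E_eq_defect30_defect41[OF c])
qed

lemma mu1E_sub_E_Espan_any_a:
  "Espan_any_a (-1) (- int c) (mu1E t X (- int u) (- int c) - E (int u - int c) (- int c))"
proof (induction c arbitrary: u rule: less_induct)
  case (less c)
  consider "c \<le> u" | "u = 0" | "0 < u" "u < c"
    by linarith
  thus ?case
  proof cases
    case 1
    thus ?thesis by (rule mu1E_sub_E_Espan_any_a_ge)
  next
    case 2
    thus ?thesis using mu1E_sub_E_Espan_any_a_0 by simp
  next
    case 3
    thus ?thesis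
      using mu1E_sub_E_Espan_any_a_less x4_power_x1_power_Espan_any_a less.IH by blast
  qed
qed

lemma mu1E_eq_E_psi:
  assumes "0 \<le> b"
  shows "mu1E t X a b = E (fst (psi (a, b))) (snd (psi (a, b)))"
proof -
  obtain B where b: "b = int B"
    using assms nonneg_int_cases by blast
  show ?thesis
  proof (cases "0 \<le> a")
    case True
    then obtain A where a: "a = int A"
      using nonneg_int_cases by blast
    have "mu1E t X a b = T (- (int A * int B)) * (x2^B * x3^A)"
      unfolding a b by (simp add: mu1E_def pp_def mult.assoc)
    also have "\<dots> = T (- (int A * int B) + 2 * int B * int A) * (x3^A * x2^B)"
      using qcommute_powers[OF commute_23, of B A] by (simp add: T_mult_left)
    also have "\<dots> = E (- int A) (int B)"
      by (simp add: E_neg_nonneg algebra_simps)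
    finally show ?thesis
      unfolding psi_def a b by (simp add: pp_def)
  next
    case False
    then obtain U where a: "a = - int U"
      by (metis nonpos_int_cases linorder_linear)
    have "mu1E t X a b = T (int U * int B) * (x2^B * x1^U)"
      unfolding a b by (simp add: mu1E_def pp_def mult.assoc)
    also have "\<dots> = T (int U * int B + -2 * int B * int U) * (x1^U * x2^B)"
      using x2_power_x1_power[of B U] by (simp add: T_mult_left)
    also have "\<dots> = E (int U) (int B)"
      by (simp add: E_nonneg_nonneg algebra_simps)
    finally show ?thesis
      unfolding psi_def a b by (simp add: pp_def)
  qed
qed

lemma mu1E_sub_E_psi_Espan_nonneg_neg:
  assumes "0 \<le> a" and "b < 0"
  shows "Espan (-1) (fst (psi (a, b))) (snd (psi (a, b)))
    (mu1E t X a b - E (fst (psi (a, b))) (snd (psi (a, b))))"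
proof -
  obtain A C where a: "a = int A" and b: "b = - int C"
    using assms by (metis nonneg_int_cases nonpos_int_cases less_le)
  have "mu1E t X a b = T (int A * int C) * (x4^C * x3^A)"
    unfolding a b by (simp add: mu1E_def pp_def mult.assoc)
  also have "\<dots> = T (- (int A * int C)) * (x3^A * x4^C)"
    using qcommute_powers[OF commute_43, of C A] by (simp add: T_mult_left algebra_simps)
  finally have "mu1E t X a b - E (fst (psi (a, b))) (snd (psi (a, b)))
      = T (- (int A * int C)) * (x3^A * x4^C - T (int A * int C) * E (- (int A + int C)) (- int C))"
    unfolding psi_def a b using assms by (simp add: pp_def right_diff_distrib T_mult_left)
  moreover have "fst (psi (a, b)) = - (int A + int C)" "snd (psi (a, b)) = - int C"
    unfolding psi_def a b by (auto simp: pp_def)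
  ultimately show ?thesis
    using x3_power_x4_power_Espan[of A C] by (auto intro: Espan_T_mult_mono)
qed

lemma mu1E_sub_E_psi_in_qminus_Aplus:
  "in_qminus_Aplus t X (mu1E t X a b - E (fst (psi (a, b))) (snd (psi (a, b))))"
proof (cases "0 \<le> b")
  case True
  thus ?thesis by (simp add: mu1E_eq_E_psi in_qminus_Aplus_zero)
next
  case b: False
  show ?thesis
  proof (cases "0 \<le> a")
    case True
    thus ?thesis
      using b by (meson Espan_in_qminus_Aplus mu1E_sub_E_psi_Espan_nonneg_neg not_le)
  next
    case False
    then obtain U C where "a = - int U" "b = - int C"
      using b by (metis nonpos_int_cases linorder_linear)
    moreover have "psi (- int U, - int C) = (int U - int C, - int C)"
      by (simp add: psi_def pp_def)
    ultimately show ?thesis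
      using mu1E_sub_E_Espan_any_a[of C U] unfolding Espan_any_a_def
      by (auto intro: Espan_in_qminus_Aplus)
  qed
qed

end

theorem lemma4p8:
  fixes t x1 x2 :: "'a::division_ring" and X :: "int \<Rightarrow> 'a" and a b :: int
  assumes "qtorus_embedding t x1 x2"
    and "X 1 = x1" and "X 2 = x2"
    and "cluster_seq t X"
  shows "in_qminus_Aplus t X
           (mu1E t X a b - stdE t X (fst (psi (a, b))) (snd (psi (a, b))))"
proof -
  interpret cluster_1_4 t X
    using assms unfolding qtorus_embedding_def by unfold_locales auto
  show ?thesis by (rule mu1E_sub_E_psi_in_qminus_Aplus)
qed

end
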